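(* Let $d\geq 1$, $p\in[1,\infty)\setminus\{2\}$, and $\lambda_1,\dots,\lambda_d>0$. Then the equation $$\sum_{i=1}^{d}\frac{1-\beta^{3-\frac{1}{p}}\lambda_i}{1+\beta^{\frac{1}{p}}\lambda_i}=0$$ in the variable $\beta$ has exactly one positive root $\beta>0$. *)

theory Defs
  imports "HOL-Analysis.Analysis"
begin

end

theory Submission
  imports Defs
begin

text \<open>Each summand is strictly decreasing in \<open>\<beta>\<close> on \<open>(0,\<infinity>)\<close>, since the exponent \<open>3 - 1/p\<close>
  in the numerator exceeds the exponent \<open>1/p\<close> in the denominator. Hence so is the sum, which is
  continuous, positive for small \<open>\<beta>\<close> (all numerators positive) and negative for large \<open>\<beta>\<close> (all
  numerators negative); the intermediate value theorem gives the root and monotonicity its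
  uniqueness.\<close>

definition ratio_term :: "real \<Rightarrow> real \<Rightarrow> real \<Rightarrow> real \<Rightarrow> real" where
  "ratio_term a b l x = (1 - x powr a * l) / (1 + x powr b * l)"

lemma ratio_term_denominator_pos:
  fixes l x b :: real
  assumes "l \<ge> 0"
  shows "0 < 1 + x powr b * l"
  using assms by (simp add: add_pos_nonneg)

lemma ratio_term_pos_iff:
  assumes "l \<ge> 0"
  shows "0 < ratio_term a b l x \<longleftrightarrow> x powr a * l < 1"
  using ratio_term_denominator_pos[OF assms, of x b]
  by (simp add: ratio_term_def zero_less_divide_iff)

lemma ratio_term_neg_iff:
  assumes "l \<ge> 0"
  shows "ratio_term a b l x < 0 \<longleftrightarrow> 1 < x powr a * l"
  using ratio_term_denominator_pos[OF assms, of x b]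
  by (simp add: ratio_term_def divide_less_0_iff)

lemma ratio_term_strict_antimono:
  fixes l x y a b :: real
  assumes l: "l > 0" and x: "0 < x" and xy: "x < y" and b: "0 < b" and ab: "b < a"
  shows "ratio_term a b l y < ratio_term a b l x"
proof -
  have y: "0 < y" using x xy by simp
  have xy_b: "x powr b < y powr b" and xy_a: "x powr a < y powr a"
    using x xy b ab by (simp_all add: powr_less_mono2)
  have "x powr b * y powr b * x powr (a - b) < x powr b * y powr b * y powr (a - b)"
    using x xy b ab by (simp add: powr_less_mono2)
  moreover have "x powr a = x powr b * x powr (a - b)" "y powr a = y powr b * y powr (a - b)"
    by (simp_all flip: powr_add)
  ultimately have cross: "x powr a * y powr b < x powr b * y powr a"
    by (simp add: algebra_simps)
  have "(1 - x powr a * l) * (1 + y powr b * l) - (1 - y powr a * l) * (1 + x powr b * l)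
      = l * (y powr b - x powr b) + l * (y powr a - x powr a)
        + l * l * (x powr b * y powr a - x powr a * y powr b)"
    by (simp add: algebra_simps)
  also have "\<dots> > 0"
    using l xy_a xy_b cross by (intro add_pos_pos) simp_all
  finally have "(1 - y powr a * l) * (1 + x powr b * l) < (1 - x powr a * l) * (1 + y powr b * l)"
    by simp
  then show ?thesis
    using ratio_term_denominator_pos[of l] l by (simp add: ratio_term_def divide_simps)
qed

lemma continuous_on_ratio_term:
  assumes "l \<ge> 0"
  shows "continuous_on {0<..} (ratio_term a b l)"
  unfolding ratio_term_def
  using ratio_term_denominator_pos[OF assms]
  by (intro continuous_intros) (auto simp: less_imp_neq[symmetric])

lemma ex1_pos_root_of_strict_antimono:
  fixes g :: "real \<Rightarrow> real"
  assumes cont: "continuous_on {0<..} g"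
    and dec: "\<And>x y. 0 < x \<Longrightarrow> x < y \<Longrightarrow> g y < g x"
    and u: "0 < u" "0 < g u" and v: "0 < v" "g v < 0"
  shows "\<exists>!x. 0 < x \<and> g x = 0"
proof -
  have "u < v"
    using dec[of v u] u v by (cases u v rule: linorder_cases) auto
  moreover have "continuous_on {u..v} g"
    using u by (intro continuous_on_subset[OF cont]) auto
  ultimately obtain r where r: "u \<le> r" "r \<le> v" "g r = 0"
    using IVT2'[of g v 0 u] u v by auto
  show ?thesis
  proof (rule ex1I[of _ r])
    show "0 < r \<and> g r = 0" using r u by simp
    show "x = r" if "0 < x \<and> g x = 0" for x
      using that r u dec[of x r] dec[of r x] by (cases x r rule: linorder_cases) auto
  qed
qed

context
  fixes I :: "'i set" and lam :: "'i \<Rightarrow> real" and a b :: real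
  assumes I: "finite I" "I \<noteq> {}" and lam: "\<And>i. i \<in> I \<Longrightarrow> lam i > 0" and a: "a > 0"
begin

lemma sum_ratio_term_pos_somewhere: "\<exists>x>0. 0 < (\<Sum>i\<in>I. ratio_term a b (lam i) x)"
proof -
  define L where "L = (\<Sum>i\<in>I. lam i)"
  have L: "lam i \<le> L" if "i \<in> I" for i
    unfolding L_def using I lam that by (intro member_le_sum) (auto intro: less_imp_le)
  have "L > 0" using L lam I by (meson all_not_in_conv order_less_le_trans)
  define x where "x = (1 / (1 + L)) powr (1 / a)"
  have x_pow: "x powr a = 1 / (1 + L)" unfolding x_def using \<open>L > 0\<close> a by (simp add: powr_powr)
  have "0 < ratio_term a b (lam i) x" if i: "i \<in> I" for i
    using L[OF i] lam[OF i] \<open>L > 0\<close>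
    by (simp add: ratio_term_pos_iff less_imp_le x_pow divide_simps)
  then show ?thesis
    using I \<open>L > 0\<close> by (intro exI[of _ x]) (auto simp: x_def intro: sum_pos)
qed

lemma sum_ratio_term_neg_somewhere: "\<exists>x>0. (\<Sum>i\<in>I. ratio_term a b (lam i) x) < 0"
proof -
  define K where "K = (\<Sum>i\<in>I. 1 / lam i)"
  have K: "1 / lam i \<le> K" if "i \<in> I" for i
    unfolding K_def using I lam that by (intro member_le_sum) (auto intro: less_imp_le)
  have "K > 0" using K lam I by (metis all_not_in_conv order_less_le_trans zero_less_divide_1_iff)
  define x where "x = (1 + K) powr (1 / a)"
  have x_pow: "x powr a = 1 + K" unfolding x_def using \<open>K > 0\<close> a by (simp add: powr_powr)
  have "0 < - ratio_term a b (lam i) x" if i: "i \<in> I" for i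
    using K[OF i] lam[OF i] \<open>K > 0\<close>
    by (simp add: ratio_term_neg_iff less_imp_le x_pow field_simps)
  then have "0 < (\<Sum>i\<in>I. - ratio_term a b (lam i) x)"
    using I by (intro sum_pos) auto
  then show ?thesis
    using \<open>K > 0\<close> by (intro exI[of _ x]) (auto simp: x_def sum_negf)
qed

lemma ex1_pos_root_sum_ratio_term:
  assumes "0 < b" "b < a"
  shows "\<exists>!x. 0 < x \<and> (\<Sum>i\<in>I. ratio_term a b (lam i) x) = 0"
proof -
  obtain u where "0 < u" "0 < (\<Sum>i\<in>I. ratio_term a b (lam i) u)"
    using sum_ratio_term_pos_somewhere by blast
  moreover obtain v where "0 < v" "(\<Sum>i\<in>I. ratio_term a b (lam i) v) < 0"
    using sum_ratio_term_neg_somewhere by blast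
  moreover have "continuous_on {0<..} (\<lambda>x. \<Sum>i\<in>I. ratio_term a b (lam i) x)"
    using lam by (intro continuous_on_sum continuous_on_ratio_term) (auto intro: less_imp_le)
  moreover have "(\<Sum>i\<in>I. ratio_term a b (lam i) y) < (\<Sum>i\<in>I. ratio_term a b (lam i) x)"
    if "0 < x" "x < y" for x y
    using I lam that assms by (intro sum_strict_mono ratio_term_strict_antimono) auto
  ultimately show ?thesis
    by (intro ex1_pos_root_of_strict_antimono) auto
qed

end

theorem theorem2:
  fixes d :: nat and p :: real and lam :: "nat \<Rightarrow> real"
  assumes "d \<ge> 1" and "p \<ge> 1" and "p \<noteq> 2"
    and "\<And>i. i \<in> {1..d} \<Longrightarrow> lam i > 0"
  shows "\<exists>!\<beta>::real. \<beta> > 0 \<and>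
    (\<Sum>i=1..d. (1 - \<beta> powr (3 - 1 / p) * lam i) / (1 + \<beta> powr (1 / p) * lam i)) = 0"
proof -
  have "0 < 1 / p" "1 / p < 3 - 1 / p"
    using \<open>p \<ge> 1\<close> by (simp_all add: field_simps)
  then have "\<exists>!\<beta>. 0 < \<beta> \<and> (\<Sum>i=1..d. ratio_term (3 - 1 / p) (1 / p) (lam i) \<beta>) = 0"
    using assms(1,4) by (intro ex1_pos_root_sum_ratio_term) auto
  then show ?thesis
    by (simp add: ratio_term_def)
qed

end
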